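(* Let $b\in\Gamma^{*,\infty}_{A_p,\rho}(\mathbb R^{2d})$ be hypoelliptic, with hypoellipticity conditions (i) and (ii) holding with a constant $B$. Then for every $h>0$ there exists $C>0$ (resp. there exist $h,C>0$) such that $$|D^n_tD^\alpha_w(e^{-tb(w)})|\le C2^nh^{|\alpha|}A_\alpha\langle w\rangle^{-\rho|\alpha|}|b(w)|^ne^{-t\mathrm{Re}\,b(w)}\sum_{r=0}^{|\alpha|}\frac{|t|^r|b(w)|^r}{r!}$$ for all $\alpha\in\mathbb N^{2d}$, $n\in\mathbb N$, $t\in\mathbb R$, $w\in Q^c_B$. If the hypoellipticity conditions hold on all of $\mathbb R^{2d}$ (i.e. $B=0$), then the estimate holds for all $w\in\mathbb R^{2d}$.
   Context: Notation: $\mathbb N=\{0,1,\dots\}$, $\langle x\rangle=(1+|x|^2)^{1/2}$, $D^\alpha=i^{-|\alpha|}\partial^\alpha$, $w=(x,\xi)\in\mathbb R^{2d}$. Sequences $M_p,A_p$ positive with $M_0=M_1=A_0=A_1=1$; (M.1) $N_p^2\le N_{p-1}N_{p+1}$; (M.2) $N_p\le c_0H^p\min_{q\le p}N_{p-q}N_q$; (M.3) $\sum_{p>q}N_{p-1}/N_p\le c_0qN_q/N_{q+1}$; (M.3)' $\sum N_{p-1}/N_p<\infty$; (M.4) $N_p^2/p!^2\le(N_{p-1}/(p-1)!)(N_{p+1}/(p+1)!)$. Standing: $M_p$ satisfies (M.1),(M.2),(M.3); $A_p$ satisfies (M.1),(M.2),(M.3)',(M.4); $A_p\le cL^pM_p$;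 $\rho$ with $\rho_0\le\rho\le1$ (strict if inf not attained), $\rho_0=\inf\{r>0:\exists c,L,\ A_p\le cL^pM_p^r\}$. $A_\alpha=A_{|\alpha|}$, $M(\lambda)=\sup_p\ln_+(\lambda^p/M_p)$. $*$: Beurling $(M_p)$ or Roumieu $\{M_p\}$; "(resp. ...)" refers to Roumieu. $\Gamma^{(M_p),\infty}_{A_p,\rho}(\mathbb R^{2d})=\varinjlim_{m\to\infty}\varprojlim_{h\to0}$, $\Gamma^{\{M_p\},\infty}_{A_p,\rho}(\mathbb R^{2d})=\varinjlim_{h\to\infty}\varprojlim_{m\to0}$ of Banach spaces of $a\in C^\infty(\mathbb R^{2d})$ with finite $\sup|D^\alpha_\xi D^\beta_xa|\langle w\rangle^{\rho(|\alpha|+|\beta|)}e^{-M(m|\xi|)-M(m|x|)}/(h^{|\alpha|+|\beta|}A_\alpha A_\beta)$. $Q_t=\{(x,\xi):\langle x\rangle<t,\langle\xi\rangle<t\}$. Hypoellipticity with constant $B$: (i) there are $c,m>0$ (resp. for every $m>0$ there is $c>0$) with $|b(x,\xi)|\ge ce^{-M(m|x|)-M(m|\xi|)}$ on $Q^c_B$; (ii) for every $h>0$ there is $C$ (resp. there are $h,C$) with $|D^\alpha_\xi D^\beta_xb|\le Ch^{|\alpha|+|\beta|}|b|A_\alpha A_\beta\langle w\rangle^{-\rho(|\alpha|+|\beta|)}$ on $Q^c_B$. *)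

theory Defs
  imports "HOL-Analysis.Analysis"
begin

text \<open>Phase space: \<open>\<real>\<^sup>2\<^sup>d = \<real>\<^sup>d \<times> \<real>\<^sup>d\<close>, modelled as \<open>(real^'n) \<times> (real^'n)\<close>
  with points \<open>w = (x, \<xi>)\<close>; the dimension \<open>d = CARD('n)\<close> is arbitrary.\<close>

datatype ultra = Beurling | Roumieu

definition weight_seq :: "(nat \<Rightarrow> real) \<Rightarrow> bool" where
  "weight_seq N \<longleftrightarrow> (\<forall>p. N p > 0) \<and> N 0 = 1 \<and> N 1 = 1"

definition condM1 :: "(nat \<Rightarrow> real) \<Rightarrow> bool" where
  "condM1 N \<longleftrightarrow> (\<forall>p\<ge>1. (N p)\<^sup>2 \<le> N (p - 1) * N (p + 1))"

definition condM2 :: "(nat \<Rightarrow> real) \<Rightarrow> bool" where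
  "condM2 N \<longleftrightarrow> (\<exists>c0 H. \<forall>p q. q \<le> p \<longrightarrow> N p \<le> c0 * H ^ p * (N (p - q) * N q))"

text \<open>(M.3): \<open>\<Sum>\<^sub>p\<^sub>>\<^sub>q N\<^sub>p\<^sub>-\<^sub>1/N\<^sub>p \<le> c\<^sub>0 q N\<^sub>q/N\<^sub>q\<^sub>+\<^sub>1\<close> for \<open>q \<ge> 1\<close>
  (substituting \<open>p = q + 1 + k\<close>).\<close>
definition condM3 :: "(nat \<Rightarrow> real) \<Rightarrow> bool" where
  "condM3 N \<longleftrightarrow> (\<exists>c0. \<forall>q\<ge>1. summable (\<lambda>k. N (q + k) / N (q + k + 1)) \<and>
      (\<Sum>k. N (q + k) / N (q + k + 1)) \<le> c0 * real q * N q / N (q + 1))"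

definition condM3' :: "(nat \<Rightarrow> real) \<Rightarrow> bool" where
  "condM3' N \<longleftrightarrow> summable (\<lambda>p. N p / N (p + 1))"

definition condM4 :: "(nat \<Rightarrow> real) \<Rightarrow> bool" where
  "condM4 N \<longleftrightarrow> (\<forall>p\<ge>1. (N p / fact p)\<^sup>2 \<le>
      (N (p - 1) / fact (p - 1)) * (N (p + 1) / fact (p + 1)))"

definition assoc_fun :: "(nat \<Rightarrow> real) \<Rightarrow> real \<Rightarrow> real" where
  "assoc_fun M lam = (SUP p. max 0 (ln (lam ^ p / M p)))"

definition rho_set :: "(nat \<Rightarrow> real) \<Rightarrow> (nat \<Rightarrow> real) \<Rightarrow> real set" where
  "rho_set M A = {r. r > 0 \<and> (\<exists>c L. \<forall>p. A p \<le> c * L ^ p * M p powr r)}"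

definition rho0 :: "(nat \<Rightarrow> real) \<Rightarrow> (nat \<Rightarrow> real) \<Rightarrow> real" where
  "rho0 M A = Inf (rho_set M A)"

definition admissible_rho :: "(nat \<Rightarrow> real) \<Rightarrow> (nat \<Rightarrow> real) \<Rightarrow> real \<Rightarrow> bool" where
  "admissible_rho M A \<rho> \<longleftrightarrow> rho0 M A \<le> \<rho> \<and> \<rho> \<le> 1 \<and>
      (rho0 M A \<notin> rho_set M A \<longrightarrow> rho0 M A < \<rho>)"

definition jbr :: "'a::real_normed_vector \<Rightarrow> real" where
  "jbr v = sqrt (1 + (norm v)\<^sup>2)"

text \<open>Note \<open>norm (x, \<xi>) = sqrt (norm x\<^sup>2 + norm \<xi>\<^sup>2)\<close>, so \<open>jbr (x,\<xi>) = \<langle>w\<rangle>\<close>.\<close>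

definition Qbox :: "real \<Rightarrow> ((real^'n) \<times> (real^'n)) set" where
  "Qbox t = {(x, \<xi>). jbr x < t \<and> jbr \<xi> < t}"

definition dderiv :: "((real^'n) \<times> (real^'n)) \<Rightarrow> (((real^'n) \<times> (real^'n)) \<Rightarrow> complex)
    \<Rightarrow> ((real^'n) \<times> (real^'n)) \<Rightarrow> complex" where
  "dderiv v f = (\<lambda>w. vector_derivative (\<lambda>s. f (w + s *\<^sub>R v)) (at 0))"

definition ex :: "'n \<Rightarrow> (real^'n) \<times> (real^'n)" where
  "ex i = (axis i 1, 0)"

definition exi :: "'n \<Rightarrow> (real^'n) \<times> (real^'n)" where
  "exi i = (0, axis i 1)"

definition coord_dirs :: "((real^'n) \<times> (real^'n)) set" where
  "coord_dirs = range ex \<union> range exi"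

text \<open>A fixed enumeration of the coordinate indices (order is irrelevant for smooth functions).\<close>
definition idx_list :: "'n::finite list" where
  "idx_list = (SOME l. distinct l \<and> set l = UNIV)"

definition dirs_of :: "('n::finite \<Rightarrow> (real^'n) \<times> (real^'n)) \<Rightarrow> ('n \<Rightarrow> nat)
    \<Rightarrow> ((real^'n) \<times> (real^'n)) list" where
  "dirs_of e \<alpha> = concat (map (\<lambda>i. replicate (\<alpha> i) (e i)) idx_list)"

definition mlen :: "('n::finite \<Rightarrow> nat) \<Rightarrow> nat" where
  "mlen \<alpha> = (\<Sum>i\<in>UNIV. \<alpha> i)"

text \<open>\<open>D\<^sup>\<alpha>\<^sub>\<xi> D\<^sup>\<beta>\<^sub>x f\<close> with \<open>D = \<i>\<^sup>-\<^sup>1\<partial>\<close>.\<close>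
definition Dop :: "('n::finite \<Rightarrow> nat) \<Rightarrow> ('n \<Rightarrow> nat)
    \<Rightarrow> (((real^'n) \<times> (real^'n)) \<Rightarrow> complex) \<Rightarrow> ((real^'n) \<times> (real^'n)) \<Rightarrow> complex" where
  "Dop \<alpha> \<beta> f w = (- \<i>) ^ (mlen \<alpha> + mlen \<beta>) *
      foldr dderiv (dirs_of exi \<alpha> @ dirs_of ex \<beta>) f w"

definition smooth :: "(((real^'n::finite) \<times> (real^'n)) \<Rightarrow> complex) \<Rightarrow> bool" where
  "smooth f \<longleftrightarrow> (\<forall>vs. set vs \<subseteq> coord_dirs \<longrightarrow>
      continuous_on UNIV (foldr dderiv vs f) \<and>
      (\<forall>v\<in>coord_dirs. \<forall>w. (\<lambda>s. foldr dderiv vs f (w + s *\<^sub>R v)) differentiable (at 0)))"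

fun tderiv :: "nat \<Rightarrow> (real \<Rightarrow> complex) \<Rightarrow> real \<Rightarrow> complex" where
  "tderiv 0 g = g"
| "tderiv (Suc n) g = (\<lambda>t. vector_derivative (tderiv n g) (at t))"

definition Dtw_exp :: "nat \<Rightarrow> ('n::finite \<Rightarrow> nat) \<Rightarrow> ('n \<Rightarrow> nat)
    \<Rightarrow> (((real^'n) \<times> (real^'n)) \<Rightarrow> complex) \<Rightarrow> real \<Rightarrow> ((real^'n) \<times> (real^'n)) \<Rightarrow> complex" where
  "Dtw_exp n \<alpha> \<beta> b t w = (- \<i>) ^ n *
      tderiv n (\<lambda>s. Dop \<alpha> \<beta> (\<lambda>w'. exp (- (complex_of_real s * b w'))) w) t"

definition in_Gamma :: "ultra \<Rightarrow> (nat \<Rightarrow> real) \<Rightarrow> (nat \<Rightarrow> real) \<Rightarrow> real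
    \<Rightarrow> (((real^'n::finite) \<times> (real^'n)) \<Rightarrow> complex) \<Rightarrow> bool" where
  "in_Gamma kind M A \<rho> a \<longleftrightarrow> smooth a \<and>
    (let bnd = (\<lambda>m h C. \<forall>\<alpha> \<beta> x \<xi>.
        norm (Dop \<alpha> \<beta> a (x, \<xi>)) * jbr (x, \<xi>) powr (\<rho> * real (mlen \<alpha> + mlen \<beta>))
          * exp (- assoc_fun M (m * norm \<xi>) - assoc_fun M (m * norm x))
          / (h ^ (mlen \<alpha> + mlen \<beta>) * A (mlen \<alpha>) * A (mlen \<beta>)) \<le> C)
     in case kind of
       Beurling \<Rightarrow> (\<exists>m>0. \<forall>h>0. \<exists>C. bnd m h C)
     | Roumieu \<Rightarrow> (\<exists>h>0. \<forall>m>0. \<exists>C. bnd m h C))"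

definition hypo_i :: "ultra \<Rightarrow> (nat \<Rightarrow> real) \<Rightarrow> real
    \<Rightarrow> (((real^'n::finite) \<times> (real^'n)) \<Rightarrow> complex) \<Rightarrow> bool" where
  "hypo_i kind M B b \<longleftrightarrow>
    (let low = (\<lambda>c m. \<forall>x \<xi>. (x, \<xi>) \<notin> Qbox B \<longrightarrow>
        norm (b (x, \<xi>)) \<ge> c * exp (- assoc_fun M (m * norm x) - assoc_fun M (m * norm \<xi>)))
     in case kind of
       Beurling \<Rightarrow> (\<exists>c>0. \<exists>m>0. low c m)
     | Roumieu \<Rightarrow> (\<forall>m>0. \<exists>c>0. low c m))"

definition hypo_ii :: "ultra \<Rightarrow> (nat \<Rightarrow> real) \<Rightarrow> real \<Rightarrow> real
    \<Rightarrow> (((real^'n::finite) \<times> (real^'n)) \<Rightarrow> complex) \<Rightarrow> bool" where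
  "hypo_ii kind A \<rho> B b \<longleftrightarrow>
    (let est = (\<lambda>h C. \<forall>\<alpha> \<beta> x \<xi>. (x, \<xi>) \<notin> Qbox B \<longrightarrow>
        norm (Dop \<alpha> \<beta> b (x, \<xi>)) \<le> C * h ^ (mlen \<alpha> + mlen \<beta>) * norm (b (x, \<xi>))
          * A (mlen \<alpha>) * A (mlen \<beta>) * jbr (x, \<xi>) powr (- \<rho> * real (mlen \<alpha> + mlen \<beta>)))
     in case kind of
       Beurling \<Rightarrow> (\<forall>h>0. \<exists>C. est h C)
     | Roumieu \<Rightarrow> (\<exists>h>0. \<exists>C. est h C))"

definition hypoelliptic :: "ultra \<Rightarrow> (nat \<Rightarrow> real) \<Rightarrow> (nat \<Rightarrow> real) \<Rightarrow> real \<Rightarrow> real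
    \<Rightarrow> (((real^'n::finite) \<times> (real^'n)) \<Rightarrow> complex) \<Rightarrow> bool" where
  "hypoelliptic kind M A \<rho> B b \<longleftrightarrow> hypo_i kind M B b \<and> hypo_ii kind A \<rho> B b"

text \<open>Multi-index on \<open>\<real>\<^sup>2\<^sup>d\<close> is the pair \<open>(\<beta>, \<alpha>)\<close> (x-part, \<xi>-part), of length
  \<open>mlen \<alpha> + mlen \<beta>\<close>.\<close>
definition exp_estimate :: "(nat \<Rightarrow> real) \<Rightarrow> real \<Rightarrow> real
    \<Rightarrow> (((real^'n::finite) \<times> (real^'n)) \<Rightarrow> complex) \<Rightarrow> real \<Rightarrow> real \<Rightarrow> bool" where
  "exp_estimate A \<rho> B b h C \<longleftrightarrow>
    (\<forall>\<alpha> \<beta> n t w. w \<notin> Qbox B \<longrightarrow>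
       norm (Dtw_exp n \<alpha> \<beta> b t w) \<le>
         C * 2 ^ n * h ^ (mlen \<alpha> + mlen \<beta>) * A (mlen \<alpha> + mlen \<beta>)
         * jbr w powr (- \<rho> * real (mlen \<alpha> + mlen \<beta>))
         * norm (b w) ^ n * exp (- t * Re (b w))
         * (\<Sum>r\<le>mlen \<alpha> + mlen \<beta>. \<bar>t\<bar> ^ r * norm (b w) ^ r / fact r))"

end

theory Submission
  imports Defs "HOL-Library.Sublist" "HOL-Computational_Algebra.Polynomial"
begin

text \<open>Differentiating \<open>exp (-t b)\<close> along the directions of a multi-index \<open>\<alpha>\<close> gives
  \<open>exp (-t b)\<close> times a sum over the partitions \<open>P\<close> of these directions into blocks, \<open>P\<close>
  contributing \<open>(-t)^|P| \<Prod>\<^sub>B\<^sub>\<in>\<^sub>P \<partial>\<^sub>B b\<close>. By (ii) a partition with \<open>k\<close> blocks is bounded by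
  \<open>C^k |b|^k h^|\<alpha>| \<langle>w\<rangle>^(-\<rho>|\<alpha>|) \<Prod>\<^sub>B A\<^sub>|\<^sub>B\<^sub>|\<close>. Log-convexity of \<open>A\<^sub>p/p!\<close> (M.4) bounds
  \<open>\<Prod>\<^sub>B A\<^sub>|\<^sub>B\<^sub>|/|B|!\<close> by \<open>A\<^sub>|\<^sub>\<alpha>\<^sub>|/|\<alpha>|!\<close> divided by the first \<open>k - 1\<close> ratios
  \<open>(A\<^sub>p\<^sub>+\<^sub>1/(p+1)!)/(A\<^sub>p/p!)\<close>; these increase to infinity by (M.3)' and so absorb \<open>C^k\<close>.
  Summed over the partitions with \<open>k\<close> blocks, the weights \<open>\<Prod>\<^sub>B |B|!\<close> are at most
  \<open>3^|\<alpha>| |\<alpha>|!/k!\<close>. Hence \<open>D\<^sup>\<alpha> exp (-t b) = exp (-t b) q(t)\<close> for a polynomial \<open>q\<close> of degree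
  at most \<open>|\<alpha>|\<close> whose \<open>k\<close>-th coefficient is \<open>O(|b|^k/k!)\<close>. Finally \<open>\<partial>\<^sub>t\<close> replaces \<open>q\<close> by
  \<open>q' - b q\<close>, which preserves this coefficient bound up to a factor \<open>2|b|\<close>.\<close>

section \<open>Log-convex weight sequences\<close>

definition reduced :: "(nat \<Rightarrow> real) \<Rightarrow> nat \<Rightarrow> real" where
  "reduced A p = A p / fact p"

definition reduced_ratio :: "(nat \<Rightarrow> real) \<Rightarrow> nat \<Rightarrow> real" where
  "reduced_ratio A p = reduced A (Suc p) / reduced A p"

text \<open>(M.4) says that \<open>reduced A\<close> is log-convex, i.e. that \<open>reduced_ratio A\<close> increases.\<close>

locale logconvex_weight =
  fixes A :: "nat \<Rightarrow> real"
  assumes weight: "weight_seq A" and M4: "condM4 A"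
begin

lemma A_pos: "A p > 0"
  using weight by (auto simp: weight_seq_def)

lemma reduced_pos: "reduced A p > 0"
  using A_pos by (simp add: reduced_def)

lemma reduced_0: "reduced A 0 = 1" and reduced_1: "reduced A (Suc 0) = 1"
  using weight by (auto simp: weight_seq_def reduced_def)

lemma reduced_ratio_pos: "reduced_ratio A p > 0"
  using reduced_pos by (simp add: reduced_ratio_def)

lemma reduced_Suc: "reduced A (Suc p) = reduced A p * reduced_ratio A p"
  using reduced_pos[of p] by (simp add: reduced_ratio_def)

lemma reduced_ratio_0: "reduced_ratio A 0 = 1"
  by (simp add: reduced_ratio_def reduced_0 reduced_1)

lemma reduced_ratio_le_Suc: "reduced_ratio A p \<le> reduced_ratio A (Suc p)"
proof -
  have "(A (Suc p) / fact (Suc p))\<^sup>2 \<le> (A p / fact p) * (A (Suc (Suc p)) / fact (Suc (Suc p)))"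
    using M4[unfolded condM4_def, rule_format, of "Suc p"] by simp
  hence "(reduced A (Suc p))\<^sup>2 \<le> reduced A p * reduced A (Suc (Suc p))"
    by (simp add: reduced_def)
  thus ?thesis using reduced_pos[of p] reduced_pos[of "Suc p"]
    by (simp add: reduced_ratio_def divide_simps power2_eq_square mult.commute)
qed

lemma reduced_ratio_mono: "p \<le> q \<Longrightarrow> reduced_ratio A p \<le> reduced_ratio A q"
  by (induction q rule: dec_induct) (use reduced_ratio_le_Suc order_trans in blast)+

lemma reduced_Suc_mult_le: "reduced A (Suc p) * reduced A (Suc q) \<le> reduced A (Suc (p + q))"
proof (induction p)
  case 0
  then show ?case by (simp add: reduced_1)
next
  case (Suc p)
  have "reduced A (Suc (Suc p)) * reduced A (Suc q)
      = reduced_ratio A (Suc p) * (reduced A (Suc p) * reduced A (Suc q))"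
    by (simp add: reduced_Suc[of "Suc p"] ac_simps)
  also have "\<dots> \<le> reduced_ratio A (Suc p) * reduced A (Suc (p + q))"
    using Suc reduced_ratio_pos by (intro mult_left_mono) (auto intro: less_imp_le)
  also have "\<dots> \<le> reduced_ratio A (Suc (p + q)) * reduced A (Suc (p + q))"
    using reduced_pos reduced_ratio_mono[of "Suc p" "Suc (p + q)"]
    by (intro mult_right_mono) (auto intro: less_imp_le)
  also have "\<dots> = reduced A (Suc (Suc p + q))"
    by (simp add: reduced_Suc[of "Suc (p + q)"] ac_simps)
  finally show ?case .
qed

lemma reduced_mult_le: "reduced A p * reduced A q \<le> reduced A (p + q)"
proof (cases "p = 0 \<or> q = 0")
  case True
  then show ?thesis by (auto simp: reduced_0)
next
  case False
  then obtain p' q' where pq: "p = Suc p'" "q = Suc q'"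
    by (metis not0_implies_Suc)
  have "reduced A p * reduced A q \<le> reduced A (Suc (p' + q'))"
    unfolding pq by (rule reduced_Suc_mult_le)
  also have "\<dots> \<le> reduced A (Suc (p' + q')) * reduced_ratio A (Suc (p' + q'))"
    using reduced_pos[of "Suc (p' + q')"] reduced_ratio_mono[of 0 "Suc (p' + q')"]
    by (simp add: reduced_ratio_0)
  also have "\<dots> = reduced A (p + q)"
    using pq by (simp add: reduced_Suc)
  finally show ?thesis .
qed

lemma A_eq_reduced: "A p = reduced A p * fact p"
  by (simp add: reduced_def)

lemma A_mult_le: "A p * A q \<le> A (p + q)"
proof -
  have "fact p * fact q \<le> (fact (p + q) :: nat)"
    using fact_fact_dvd_fact[of p q] by (intro dvd_imp_le) auto
  hence fact_le: "fact p * fact q \<le> (fact (p + q) :: real)"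
    by (metis of_nat_fact of_nat_le_iff of_nat_mult)
  have "A p * A q = (reduced A p * reduced A q) * (fact p * fact q)"
    by (simp add: A_eq_reduced ac_simps)
  also have "\<dots> \<le> reduced A (p + q) * fact (p + q)"
    using reduced_pos
    by (intro mult_mono reduced_mult_le fact_le) (auto intro: less_imp_le mult_nonneg_nonneg)
  finally show ?thesis
    by (simp add: A_eq_reduced)
qed

lemma prod_reduced_mult_ratios_le:
  assumes "\<forall>j\<in>set js. 1 \<le> j"
  shows "prod_list (map (reduced A) js) * (\<Prod>i\<in>{1..<length js}. reduced_ratio A i)
    \<le> reduced A (sum_list js)"
  using assms
proof (induction js)
  case Nil
  then show ?case by (simp add: reduced_0)
next
  case (Cons j js)
  show ?case
  proof (cases "js = []")
    case True
    then show ?thesis by simp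
  next
    case False
    define k where "k = length js"
    define m where "m = sum_list js"
    have k1: "k \<ge> 1" using False by (cases js) (auto simp: k_def)
    have "k \<le> sum_list (map (\<lambda>_. 1::nat) js)" by (simp add: k_def sum_list_triv)
    also have "\<dots> \<le> m" unfolding m_def using Cons.prems
      by (induction js) (auto intro: add_mono)
    finally have km: "k \<le> m" .
    have IH: "prod_list (map (reduced A) js) * (\<Prod>i\<in>{1..<k}. reduced_ratio A i) \<le> reduced A m"
      using Cons by (simp add: k_def m_def)
    obtain j' where j': "j = Suc j'" using Cons.prems by (cases j) auto
    have "prod_list (map (reduced A) (j # js)) * (\<Prod>i\<in>{1..<length (j # js)}. reduced_ratio A i)
        = reduced A j * (prod_list (map (reduced A) js) * (\<Prod>i\<in>{1..<k}. reduced_ratio A i))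
          * reduced_ratio A k"
      using k1 by (simp add: k_def[symmetric] prod.atLeastLessThan_Suc ac_simps)
    also have "\<dots> \<le> reduced A j * reduced A m * reduced_ratio A k"
      using reduced_pos reduced_ratio_pos IH
      by (intro mult_right_mono mult_left_mono) (auto intro: less_imp_le)
    also have "\<dots> \<le> reduced A j * reduced A m * reduced_ratio A m"
      using reduced_pos reduced_ratio_mono[OF km] by (intro mult_left_mono) (auto intro: less_imp_le)
    also have "\<dots> = reduced A (Suc j') * reduced A (Suc m)"
      by (simp add: j' reduced_Suc ac_simps)
    also have "\<dots> \<le> reduced A (sum_list (j # js))"
      using reduced_Suc_mult_le[of j' m] by (simp add: j' m_def)
    finally show ?thesis .
  qed
qed

lemma reduced_ratio_unbounded:
  assumes "condM3' A"
  shows "\<exists>N. \<forall>p\<ge>N. D \<le> reduced_ratio A p"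
proof (rule ccontr)
  assume "\<not> ?thesis"
  hence "\<forall>N. \<exists>p\<ge>N. reduced_ratio A p < D" by (auto simp: not_le)
  hence bounded: "reduced_ratio A p \<le> D" for p
    using reduced_ratio_mono by (meson le_less_trans less_imp_le)
  have D_pos: "D > 0" using bounded[of 0] reduced_ratio_0 by simp
  have ratio: "A p / A (p + 1) = inverse (reduced_ratio A p * real (Suc p))" for p
    using reduced_Suc[of p] A_pos[of p] reduced_pos[of p]
    by (simp add: A_eq_reduced field_simps del: of_nat_Suc)
  have "inverse (D * real (Suc p)) \<le> inverse (reduced_ratio A p * real (Suc p))" for p
    using reduced_ratio_pos[of p] bounded[of p] by (intro le_imp_inverse_le mult_right_mono) auto
  hence comparison: "norm (inverse (D * real (Suc p))) \<le> A p / A (p + 1)" for p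
    unfolding ratio using D_pos by (simp only: real_norm_def abs_of_pos positive_imp_inverse_positive
      mult_pos_pos of_nat_0_less_iff zero_less_Suc)
  have "summable (\<lambda>p. inverse (D * real (Suc p)))"
  proof (rule summable_comparison_test)
    show "\<exists>N. \<forall>p\<ge>N. norm (inverse (D * real (Suc p))) \<le> A p / A (p + 1)"
      using comparison by blast
    show "summable (\<lambda>p. A p / A (p + 1))"
      using assms by (simp add: condM3'_def)
  qed
  hence "summable (\<lambda>p. D * inverse (D * real (Suc p)))" by (rule summable_mult)
  hence "summable (\<lambda>p. inverse (real (Suc p)))" using D_pos by simp
  hence "summable (\<lambda>p. inverse (real p))"
    using summable_Suc_iff[of "\<lambda>p. inverse (real p)"] by simp
  thus False using not_summable_harmonic[where 'a=real] by simp
qed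

lemma power_le_prod_reduced_ratio:
  assumes "condM3' A" and "D \<ge> 0"
  shows "\<exists>E\<ge>1. \<forall>k. D ^ k \<le> E * (\<Prod>i\<in>{1..<k}. reduced_ratio A i)"
proof -
  obtain N0 where N0: "\<forall>p\<ge>N0. D \<le> reduced_ratio A p"
    using reduced_ratio_unbounded[OF assms(1)] by blast
  define N where "N = Suc N0"
  define P where "P k = (\<Prod>i\<in>{1..<k}. reduced_ratio A i)" for k
  have P_pos: "P k > 0" for k using reduced_ratio_pos by (simp add: P_def prod_pos)
  define E where "E = (\<Sum>j\<le>N. D ^ j / P j)"
  have term_nonneg: "0 \<le> D ^ j / P j" for j using P_pos[of j] assms(2) by simp
  have ratio_bound: "D ^ k / P k \<le> E" for k
  proof (induction k)
    case 0
    then show ?case unfolding E_def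
      using member_le_sum[of 0 "{..N}" "\<lambda>j. D ^ j / P j"] term_nonneg by simp
  next
    case (Suc k)
    show ?case
    proof (cases "Suc k \<le> N")
      case True
      then show ?thesis unfolding E_def
        using member_le_sum[of "Suc k" "{..N}" "\<lambda>j. D ^ j / P j"] term_nonneg by simp
    next
      case False
      hence "P (Suc k) = P k * reduced_ratio A k"
        by (simp add: P_def N_def prod.atLeastLessThan_Suc)
      hence "D ^ Suc k / P (Suc k) = (D ^ k / P k) * (D / reduced_ratio A k)" by simp
      also have "\<dots> \<le> D ^ k / P k"
        using N0 False reduced_ratio_pos[of k] term_nonneg[of k]
        by (intro mult_left_le) (auto simp: N_def)
      finally show ?thesis using Suc by simp
    qed
  qed
  have "D ^ k \<le> E * P k" for k
    using ratio_bound[of k] P_pos[of k] by (simp add: divide_le_eq)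
  hence "D ^ k \<le> (E + 1) * P k" for k
    using P_pos[of k] by (smt (verit) distrib_right mult_cancel_right1)
  moreover have "1 \<le> E + 1" using term_nonneg by (simp add: E_def sum_nonneg)
  ultimately show ?thesis unfolding P_def by blast
qed

end

section \<open>Partitions of a list\<close>

text \<open>Every partition of the list into nonempty subsequences (blocks) occurs exactly once.\<close>

fun list_partitions :: "'a list \<Rightarrow> 'a list list list" where
  "list_partitions [] = [[]]"
| "list_partitions (v # vs) = concat (map (\<lambda>P. ([v] # P) # map (\<lambda>i. P[i := v # P ! i]) [0..<length P])
    (list_partitions vs))"

lemma sum_list_map_update:
  "i < length xs \<Longrightarrow>
    sum_list (map f (xs[i := y])) + f (xs ! i) = sum_list (map f xs) + (f y :: 'b::comm_monoid_add)"
  by (induction xs arbitrary: i) (auto split: nat.splits simp: ac_simps)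

lemma prod_list_map_update:
  "i < length xs \<Longrightarrow>
    prod_list (map f (xs[i := y])) * f (xs ! i) = prod_list (map f xs) * (f y :: 'b::comm_monoid_mult)"
  by (induction xs arbitrary: i) (auto split: nat.splits simp: ac_simps)

lemma sum_list_map_concat:
  "sum_list (map f (concat xss)) = sum_list (map (\<lambda>xs. sum_list (map f xs)) xss)"
  by (induction xss) auto

lemma list_partitions_props:
  "P \<in> set (list_partitions L) \<Longrightarrow>
    sum_list (map length P) = length L \<and> (\<forall>B\<in>set P. B \<noteq> [] \<and> subseq B L) \<and> length P \<le> length L"
proof (induction L arbitrary: P)
  case Nil
  then show ?case by simp
next
  case (Cons v vs)
  then obtain P0 where P0: "P0 \<in> set (list_partitions vs)"
    and "P \<in> set (([v] # P0) # map (\<lambda>i. P0[i := v # P0 ! i]) [0..<length P0])"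
    by auto
  hence P: "P = [v] # P0 \<or> (\<exists>i<length P0. P = P0[i := v # P0 ! i])" by auto
  from Cons.IH[OF P0] have IH: "sum_list (map length P0) = length vs"
    "\<forall>B\<in>set P0. B \<noteq> [] \<and> subseq B vs" "length P0 \<le> length vs"
    by auto
  from P show ?case
  proof
    assume "P = [v] # P0"
    then show ?thesis using IH by auto
  next
    assume "\<exists>i<length P0. P = P0[i := v # P0 ! i]"
    then obtain i where i: "i < length P0" and P: "P = P0[i := v # P0 ! i]" by auto
    have "sum_list (map length P) = Suc (length vs)"
      using sum_list_map_update[OF i, of length "v # P0 ! i"] IH(1) by (simp add: P)
    moreover have "B \<noteq> [] \<and> subseq B (v # vs)" if "B \<in> set P" for B
    proof -
      have "B \<in> insert (v # P0 ! i) (set P0)" using that set_update_subset_insert P by fastforce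
      moreover have "subseq (P0 ! i) vs" using IH(2) i by auto
      ultimately show ?thesis using IH(2) by auto
    qed
    ultimately show ?thesis using IH(3) P by simp
  qed
qed

lemma list_partitions_block_subset:
  assumes "P \<in> set (list_partitions L)" and "B \<in> set P"
  shows "set B \<subseteq> set L"
proof
  fix x assume x: "x \<in> set B"
  have "subseq B L" using list_partitions_props[OF assms(1)] assms(2) by blast
  from list_emb_set[OF this x] show "x \<in> set L" by auto
qed

definition fact_weight :: "'a list list \<Rightarrow> real" where
  "fact_weight P = prod_list (map (\<lambda>B. fact (length B)) P)"

definition weighted_partitions :: "'a list \<Rightarrow> nat \<Rightarrow> real" where
  "weighted_partitions L k =
    sum_list (map (\<lambda>P. if length P = k then fact_weight P else 0) (list_partitions L))"

lemma fact_weight_pos: "fact_weight P > 0"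
  unfolding fact_weight_def by (induction P) auto

lemma fact_weight_update:
  assumes i: "i < length P"
  shows "fact_weight (P[i := v # P ! i]) = fact_weight P * (real (length (P ! i)) + 1)"
proof -
  have "fact_weight (P[i := v # P ! i]) * fact (length (P ! i))
      = fact_weight P * fact (Suc (length (P ! i)))"
    unfolding fact_weight_def using prod_list_map_update[OF i, of "\<lambda>B. fact (length B)" "v # P ! i"]
    by (simp del: fact_Suc)
  also have "\<dots> = (fact_weight P * (real (length (P ! i)) + 1)) * fact (length (P ! i))"
    by (simp add: algebra_simps)
  finally show ?thesis
    by (metis fact_gt_zero less_irrefl mult_right_cancel)
qed

lemma weighted_partitions_eq_0:
  assumes "k > length L"
  shows "weighted_partitions L k = 0"
proof -
  have "\<forall>P\<in>set (list_partitions L). length P \<noteq> k"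
    using assms list_partitions_props by fastforce
  hence "map (\<lambda>P. if length P = k then fact_weight P else 0) (list_partitions L)
      = map (\<lambda>P. 0) (list_partitions L)"
    by auto
  thus ?thesis unfolding weighted_partitions_def by (simp only:) simp
qed

lemma weighted_partitions_Cons:
  "weighted_partitions (v # vs) k
    = (if k \<ge> 1 then weighted_partitions vs (k - 1) else 0) + (real (length vs) + real k) * weighted_partitions vs k"
proof -
  define g where "g P = (if length P = k then fact_weight P else 0)" for P :: "'a list list"
  define extend where "extend P = map (\<lambda>i. P[i := v # P ! i]) [0..<length P]" for P :: "'a list list"
  have extend_sum: "sum_list (map g (extend P)) = (real (length vs) + real k) * g P"
    if P: "P \<in> set (list_partitions vs)" for P
  proof -
    have "sum_list (map g (extend P)) = (\<Sum>i<length P. g (P[i := v # P ! i]))"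
      using sum_set_upt_conv_sum_list_nat[of "\<lambda>i. g (P[i := v # P ! i])" 0 "length P"]
      by (simp add: extend_def o_def lessThan_atLeast0)
    also have "\<dots> = (\<Sum>i<length P. if length P = k then fact_weight P * (real (length (P ! i)) + 1) else 0)"
      by (intro sum.cong) (auto simp: g_def fact_weight_update)
    also have "\<dots> = (if length P = k then fact_weight P * (real (\<Sum>i<length P. length (P ! i)) + real (length P))
        else 0)"
      by (auto simp: sum_distrib_left[symmetric] sum.distrib)
    also have "(\<Sum>i<length P. length (P ! i)) = length vs"
      using list_partitions_props[OF P] by (simp add: sum_list_sum_nth atLeast0LessThan)
    finally show ?thesis by (simp add: g_def[abs_def] ac_simps)
  qed
  have "weighted_partitions (v # vs) k
      = sum_list (map (\<lambda>P. g ([v] # P) + sum_list (map g (extend P))) (list_partitions vs))"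
    by (simp add: weighted_partitions_def g_def[abs_def] extend_def sum_list_map_concat o_def)
  also have "\<dots> = sum_list (map (\<lambda>P. (if k \<ge> 1 \<and> length P = k - 1 then fact_weight P else 0)
      + (real (length vs) + real k) * g P) (list_partitions vs))"
    by (intro arg_cong[where f=sum_list] map_cong refl) (auto simp: extend_sum g_def fact_weight_def)
  also have "\<dots> = (if k \<ge> 1 then weighted_partitions vs (k - 1) else 0)
      + (real (length vs) + real k) * weighted_partitions vs k"
    by (auto simp: weighted_partitions_def g_def[abs_def] sum_list_addf sum_list_const_mult)
  finally show ?thesis .
qed

lemma weighted_partitions_le: "weighted_partitions L k \<le> 3 ^ length L * fact (length L) / fact k"
proof (induction L arbitrary: k)
  case Nil
  show ?case by (cases k) (auto simp: weighted_partitions_def fact_weight_def)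
next
  case (Cons v vs)
  define m where "m = length vs"
  define X where "X = (3 ^ m * fact m / fact k :: real)"
  have X_nonneg: "X \<ge> 0" by (simp add: X_def)
  show ?case
  proof (cases "k \<le> Suc m")
    case False
    then show ?thesis using weighted_partitions_eq_0[of "v # vs" k] by (simp add: m_def)
  next
    case True
    have new_block: "(if k \<ge> 1 then weighted_partitions vs (k - 1) else 0) \<le> (real m + 1) * X"
    proof (cases "k \<ge> 1")
      case k1: True
      hence "fact k = real k * fact (k - 1)" using fact_reduce[of k, where 'a=real] by simp
      hence "weighted_partitions vs (k - 1) \<le> real k * X"
        using Cons.IH[of "k - 1"] k1 by (simp add: X_def m_def field_simps)
      also have "\<dots> \<le> (real m + 1) * X"
        using True by (intro mult_right_mono) (auto simp: X_def)
      finally show ?thesis using k1 by simp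
    qed (simp add: X_def)
    have extend_block: "(real m + real k) * weighted_partitions vs k \<le> 2 * (real m + 1) * X"
    proof (cases "k \<le> m")
      case True
      have "(real m + real k) * weighted_partitions vs k \<le> (real m + real k) * X"
        using Cons.IH[of k] by (intro mult_left_mono) (auto simp: X_def m_def)
      also have "\<dots> \<le> 2 * (real m + 1) * X"
        using True by (intro mult_right_mono) (auto simp: X_def)
      finally show ?thesis .
    qed (simp add: weighted_partitions_eq_0 m_def X_def)
    have "weighted_partitions (v # vs) k \<le> 3 * (real m + 1) * X"
      using weighted_partitions_Cons[of v vs k] new_block extend_block X_nonneg
      unfolding m_def by linarith
    also have "\<dots> = 3 ^ length (v # vs) * fact (length (v # vs)) / fact k"
      by (simp add: X_def m_def field_simps)
    finally show ?thesis .
  qed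
qed

section \<open>Multi-indices as lists of directions\<close>

lemma subseq_concat_replicate:
  "distinct l \<Longrightarrow> subseq xs (concat (map (\<lambda>i. replicate (\<alpha> i) (e i)) l)) \<Longrightarrow>
   \<exists>\<alpha>'. xs = concat (map (\<lambda>i. replicate (\<alpha>' i) (e i)) l)"
proof (induction l arbitrary: xs)
  case Nil then show ?case by simp
next
  case (Cons i l)
  from Cons.prems(2) obtain xs1 xs2 where x: "xs = xs1 @ xs2"
    and s1: "subseq xs1 (replicate (\<alpha> i) (e i))" and s2: "subseq xs2 (concat (map (\<lambda>i. replicate (\<alpha> i) (e i)) l))"
    by (auto elim: subseq_appendE)
  obtain \<alpha>' where a: "xs2 = concat (map (\<lambda>i. replicate (\<alpha>' i) (e i)) l)"
    using Cons.IH[OF _ s2] Cons.prems(1) by auto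
  have "\<forall>y\<in>set xs1. y = e i"
  proof
    fix y assume "y \<in> set xs1"
    then obtain z where "z \<in> set (replicate (\<alpha> i) (e i))" "y = z" using list_emb_set[OF s1] by metis
    thus "y = e i" by simp
  qed
  hence "xs1 = replicate (length xs1) (e i)" using replicate_length_same by metis
  then obtain n where xs1: "xs1 = replicate n (e i)" by blast
  have "i \<notin> set l" using Cons.prems(1) by simp
  hence mc: "map (\<lambda>j. replicate ((\<alpha>'(i := n)) j) (e j)) l = map (\<lambda>j. replicate (\<alpha>' j) (e j)) l"
    by (intro map_cong) auto
  have "xs = replicate ((\<alpha>'(i := n)) i) (e i) @ concat (map (\<lambda>j. replicate ((\<alpha>'(i := n)) j) (e j)) l)"
    unfolding mc using x a xs1 by simp
  hence "xs = concat (map (\<lambda>j. replicate ((\<alpha>'(i := n)) j) (e j)) (i # l))"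
    by simp
  thus ?case by blast
qed

lemma distinct_idx_list: "distinct (idx_list :: 'n::finite list)"
  and set_idx_list: "set (idx_list :: 'n list) = UNIV"
proof -
  have "\<exists>l. distinct l \<and> set l = (UNIV :: 'n set)"
    using finite_distinct_list[of "UNIV :: 'n set"] by auto
  from someI_ex[OF this] show "distinct (idx_list :: 'n list)" "set (idx_list :: 'n list) = UNIV"
    unfolding idx_list_def by simp_all
qed

lemma length_dirs_of: "length (dirs_of e \<alpha>) = mlen \<alpha>"
proof -
  have g: "length (concat (map (\<lambda>i. replicate (\<alpha> i) (e i)) l)) = sum_list (map \<alpha> l)" for l :: "'a list"
    by (induction l) auto
  have "length (dirs_of e \<alpha>) = sum_list (map \<alpha> idx_list)"
    unfolding dirs_of_def by (rule g)
  also have "\<dots> = sum \<alpha> (set idx_list)"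
    using distinct_idx_list by (metis sum_list_distinct_conv_sum_set)
  finally show ?thesis by (simp add: set_idx_list mlen_def)
qed

lemma subseq_dirs_of:
  assumes "subseq B (dirs_of exi \<alpha> @ dirs_of ex \<beta>)"
  shows "\<exists>\<alpha>' \<beta>'. B = dirs_of exi \<alpha>' @ dirs_of ex \<beta>' \<and> length B = mlen \<alpha>' + mlen \<beta>'"
proof -
  obtain B1 B2 where B: "B = B1 @ B2" "subseq B1 (dirs_of exi \<alpha>)" "subseq B2 (dirs_of ex \<beta>)"
    using assms by (auto elim: subseq_appendE)
  obtain \<alpha>' where "B1 = dirs_of exi \<alpha>'"
    using subseq_concat_replicate[OF distinct_idx_list B(2)[unfolded dirs_of_def]]
    unfolding dirs_of_def by blast
  moreover obtain \<beta>' where "B2 = dirs_of ex \<beta>'"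
    using subseq_concat_replicate[OF distinct_idx_list B(3)[unfolded dirs_of_def]]
    unfolding dirs_of_def by blast
  ultimately show ?thesis using B(1) by (metis length_append length_dirs_of)
qed

lemma dirs_of_coord_dirs: "set (dirs_of exi \<alpha> @ dirs_of ex \<beta>) \<subseteq> coord_dirs"
  unfolding dirs_of_def coord_dirs_def by auto

section \<open>Directional derivatives of products and of the exponential\<close>

type_synonym 'n pt = "(real^'n) \<times> (real^'n)"

definition line_differentiable :: "'n::finite pt \<Rightarrow> ('n pt \<Rightarrow> complex) \<Rightarrow> bool" where
  "line_differentiable v f \<longleftrightarrow> (\<forall>w. (\<lambda>s. f (w + s *\<^sub>R v)) differentiable (at 0))"

lemma has_vector_derivative_dderiv:
  "line_differentiable v f \<Longrightarrow> ((\<lambda>s. f (w + s *\<^sub>R v)) has_vector_derivative dderiv v f w) (at 0)"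
  unfolding line_differentiable_def dderiv_def using vector_derivative_works by blast

lemma dderiv_eqI: "((\<lambda>s. f (w + s *\<^sub>R v)) has_vector_derivative D) (at 0) \<Longrightarrow> dderiv v f w = D"
  by (simp add: dderiv_def vector_derivative_at)

lemma line_differentiableI:
  "(\<And>w. ((\<lambda>s. f (w + s *\<^sub>R v)) has_vector_derivative D w) (at 0)) \<Longrightarrow> line_differentiable v f"
  unfolding line_differentiable_def using differentiableI_vector by blast

lemma line_differentiable_mult:
  assumes "line_differentiable v f" "line_differentiable v g"
  shows "line_differentiable v (\<lambda>w. f w * g w)"
    "dderiv v (\<lambda>w. f w * g w) w = dderiv v f w * g w + f w * dderiv v g w"
proof -
  have H: "((\<lambda>s. f (w + s *\<^sub>R v) * g (w + s *\<^sub>R v)) has_vector_derivative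
      (dderiv v f w * g w + f w * dderiv v g w)) (at 0)" for w
    using has_vector_derivative_mult[OF has_vector_derivative_dderiv[OF assms(1)]
        has_vector_derivative_dderiv[OF assms(2)], of w w]
    by (simp add: ac_simps)
  show "line_differentiable v (\<lambda>w. f w * g w)" by (rule line_differentiableI[OF H])
  show "dderiv v (\<lambda>w. f w * g w) w = dderiv v f w * g w + f w * dderiv v g w"
    by (rule dderiv_eqI[OF H])
qed

lemma line_differentiable_const: "line_differentiable v (\<lambda>w. c)" "dderiv v (\<lambda>w. c) w = 0"
proof -
  have H: "((\<lambda>s. c) has_vector_derivative 0) (at 0)" by simp
  show "line_differentiable v (\<lambda>w. c)" by (rule line_differentiableI) (rule H)
  show "dderiv v (\<lambda>w. c) w = 0" by (rule dderiv_eqI) (rule H)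
qed

lemma line_differentiable_add:
  assumes "line_differentiable v f" "line_differentiable v g"
  shows "line_differentiable v (\<lambda>w. f w + g w)"
    "dderiv v (\<lambda>w. f w + g w) w = dderiv v f w + dderiv v g w"
proof -
  have H: "((\<lambda>s. f (w + s *\<^sub>R v) + g (w + s *\<^sub>R v)) has_vector_derivative
      (dderiv v f w + dderiv v g w)) (at 0)" for w
    using has_vector_derivative_add[OF has_vector_derivative_dderiv[OF assms(1)]
        has_vector_derivative_dderiv[OF assms(2)]]
    by simp
  show "line_differentiable v (\<lambda>w. f w + g w)" by (rule line_differentiableI[OF H])
  show "dderiv v (\<lambda>w. f w + g w) w = dderiv v f w + dderiv v g w"
    by (rule dderiv_eqI[OF H])
qed

lemma line_differentiable_cmult:
  assumes "line_differentiable v f"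
  shows "line_differentiable v (\<lambda>w. c * f w)" "dderiv v (\<lambda>w. c * f w) w = c * dderiv v f w"
  using line_differentiable_mult[OF line_differentiable_const(1) assms, of c]
    line_differentiable_const(2)[of v c]
  by auto

lemma line_differentiable_sum_list:
  assumes "\<forall>x\<in>set xs. line_differentiable v (F x)"
  shows "line_differentiable v (\<lambda>w. sum_list (map (\<lambda>x. F x w) xs))"
    "dderiv v (\<lambda>w. sum_list (map (\<lambda>x. F x w) xs)) w = sum_list (map (\<lambda>x. dderiv v (F x) w) xs)"
  using assms
proof (induction xs arbitrary: w)
  case Nil
  { case 1 then show ?case using line_differentiable_const by simp }
  { case 2 then show ?case using line_differentiable_const by simp }
next
  case (Cons x xs)
  { case 1 then show ?case using Cons.IH(1) line_differentiable_add(1)[of v "F x"] by simp }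
  { case 2
    then show ?case
      using Cons.IH line_differentiable_add[of v "F x" "\<lambda>w. sum_list (map (\<lambda>x. F x w) xs)"] by simp }
qed

lemma line_differentiable_prod_list:
  assumes "\<forall>f\<in>set fs. line_differentiable v f"
  shows "line_differentiable v (\<lambda>w. prod_list (map (\<lambda>f. f w) fs))"
    "dderiv v (\<lambda>w. prod_list (map (\<lambda>f. f w) fs)) w
      = (\<Sum>i<length fs. prod_list (map (\<lambda>f. f w) (fs[i := dderiv v (fs ! i)])))"
  using assms
proof (induction fs arbitrary: w)
  case Nil
  { case 1 then show ?case using line_differentiable_const by simp }
  { case 2 then show ?case using line_differentiable_const by simp }
next
  case (Cons f fs)
  { case 1 then show ?case using Cons.IH(1) line_differentiable_mult(1)[of v f] by simp }
  { case 2
    have "dderiv v (\<lambda>w. prod_list (map (\<lambda>f. f w) (f # fs))) w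
        = dderiv v f w * prod_list (map (\<lambda>f. f w) fs)
          + f w * dderiv v (\<lambda>w. prod_list (map (\<lambda>f. f w) fs)) w"
      using 2 Cons.IH(1) line_differentiable_mult(2)[of v f "\<lambda>w. prod_list (map (\<lambda>f. f w) fs)"] by simp
    also have "\<dots> = dderiv v f w * prod_list (map (\<lambda>f. f w) fs)
        + (\<Sum>i<length fs. f w * prod_list (map (\<lambda>f. f w) (fs[i := dderiv v (fs ! i)])))"
      using 2 Cons.IH(2) by (simp add: sum_distrib_left)
    also have "\<dots>
        = (\<Sum>i<length (f # fs). prod_list (map (\<lambda>f. f w) ((f # fs)[i := dderiv v ((f # fs) ! i)])))"
      unfolding length_Cons sum.lessThan_Suc_shift by simp
    finally show ?case . }
qed

lemma line_differentiable_exp: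
  assumes "line_differentiable v b"
  shows "line_differentiable v (\<lambda>w. exp (- (T * b w)))"
    "dderiv v (\<lambda>w. exp (- (T * b w))) w = exp (- (T * b w)) * (- (T * dderiv v b w))"
proof -
  have H: "((\<lambda>s. exp (- (T * b (w + s *\<^sub>R v)))) has_vector_derivative
      (exp (- (T * b w)) * (- (T * dderiv v b w)))) (at 0)" for w
  proof -
    have i: "((\<lambda>s. - (T * b (w + s *\<^sub>R v))) has_vector_derivative (- (T * dderiv v b w))) (at 0)"
      using has_vector_derivative_mult_right[OF has_vector_derivative_dderiv[OF assms], of T w]
      by (intro has_vector_derivative_minus) simp
    have "((exp \<circ> (\<lambda>s. - (T * b (w + s *\<^sub>R v)))) has_vector_derivative
        (- (T * dderiv v b w)) * exp (- (T * b (w + 0 *\<^sub>R v)))) (at 0)"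
      by (rule field_vector_diff_chain_at[OF i]) (rule DERIV_exp)
    thus ?thesis by (simp add: o_def ac_simps)
  qed
  show "line_differentiable v (\<lambda>w. exp (- (T * b w)))" by (rule line_differentiableI[OF H])
  show "dderiv v (\<lambda>w. exp (- (T * b w))) w = exp (- (T * b w)) * (- (T * dderiv v b w))"
    by (rule dderiv_eqI[OF H])
qed

lemma line_differentiable_smooth:
  "smooth b \<Longrightarrow> set B \<subseteq> coord_dirs \<Longrightarrow> v \<in> coord_dirs \<Longrightarrow> line_differentiable v (foldr dderiv B b)"
  unfolding smooth_def line_differentiable_def by blast

definition block_prod :: "('n::finite pt \<Rightarrow> complex) \<Rightarrow> 'n pt list list \<Rightarrow> 'n pt \<Rightarrow> complex" where
  "block_prod b P w = prod_list (map (\<lambda>B. foldr dderiv B b w) P)"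

definition exp_factor :: "('n::finite pt \<Rightarrow> complex) \<Rightarrow> complex \<Rightarrow> 'n pt list \<Rightarrow> 'n pt \<Rightarrow> complex" where
  "exp_factor b T L w = sum_list (map (\<lambda>P. (- T) ^ length P * block_prod b P w) (list_partitions L))"

lemma line_differentiable_block_prod:
  assumes b: "smooth b" and L: "set L \<subseteq> coord_dirs" and P: "P \<in> set (list_partitions L)"
    and v: "v \<in> coord_dirs"
  shows "line_differentiable v (block_prod b P)"
    "dderiv v (block_prod b P) w = (\<Sum>i<length P. block_prod b (P[i := v # P ! i]) w)"
proof -
  have fs: "\<forall>f\<in>set (map (\<lambda>B. foldr dderiv B b) P). line_differentiable v f"
    using line_differentiable_smooth[OF b _ v] list_partitions_block_subset[OF P] L by fastforce
  have e: "block_prod b Q = (\<lambda>w. prod_list (map (\<lambda>f. f w) (map (\<lambda>B. foldr dderiv B b) Q)))" for Q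
    by (simp add: block_prod_def[abs_def] o_def)
  show "line_differentiable v (block_prod b P)"
    unfolding e by (rule line_differentiable_prod_list(1)[OF fs])
  show "dderiv v (block_prod b P) w = (\<Sum>i<length P. block_prod b (P[i := v # P ! i]) w)"
    unfolding e line_differentiable_prod_list(2)[OF fs] by (simp add: map_update)
qed

lemma line_differentiable_exp_factor:
  assumes b: "smooth b" and L: "set L \<subseteq> coord_dirs" and v: "v \<in> coord_dirs"
  shows "line_differentiable v (exp_factor b T L)"
    "dderiv v (exp_factor b T L) w = sum_list (map (\<lambda>P. (- T) ^ length P *
       (\<Sum>i<length P. block_prod b (P[i := v # P ! i]) w)) (list_partitions L))"
proof -
  have e: "exp_factor b T L = (\<lambda>w. sum_list (map (\<lambda>P. (\<lambda>w. (- T) ^ length P * block_prod b P w) w)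
      (list_partitions L)))"
    by (simp add: exp_factor_def[abs_def])
  have F: "\<forall>P\<in>set (list_partitions L). line_differentiable v (\<lambda>w. (- T) ^ length P * block_prod b P w)"
    using line_differentiable_cmult(1)[OF line_differentiable_block_prod(1)[OF b L _ v]] by blast
  show "line_differentiable v (exp_factor b T L)"
    unfolding e by (rule line_differentiable_sum_list(1)[OF F])
  show "dderiv v (exp_factor b T L) w = sum_list (map (\<lambda>P. (- T) ^ length P *
      (\<Sum>i<length P. block_prod b (P[i := v # P ! i]) w)) (list_partitions L))"
    unfolding e line_differentiable_sum_list(2)[OF F]
    using line_differentiable_cmult(2)[OF line_differentiable_block_prod(1)[OF b L _ v]]
      line_differentiable_block_prod(2)[OF b L _ v]
    by (intro arg_cong[where f=sum_list] map_cong refl) simp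
qed

text \<open>A new block \<open>[v]\<close> comes from differentiating the exponential, an enlarged block from
  differentiating one factor of \<open>block_prod\<close>.\<close>

lemma exp_factor_Cons:
  assumes b: "smooth b" and L: "set L \<subseteq> coord_dirs" and v: "v \<in> coord_dirs"
  shows "exp_factor b T (v # L) w
    = - (T * dderiv v b w) * exp_factor b T L w + dderiv v (exp_factor b T L) w"
proof -
  have "exp_factor b T (v # L) w = sum_list (map (\<lambda>P. (- T) ^ Suc (length P) * block_prod b ([v] # P) w
       + sum_list (map (\<lambda>Q. (- T) ^ length Q * block_prod b Q w) (map (\<lambda>i. P[i := v # P ! i]) [0..<length P])))
       (list_partitions L))"
    by (simp add: exp_factor_def sum_list_map_concat o_def)
  also have "\<dots> = sum_list (map (\<lambda>P. - (T * dderiv v b w) * ((- T) ^ length P * block_prod b P w)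
       + (- T) ^ length P * (\<Sum>i<length P. block_prod b (P[i := v # P ! i]) w)) (list_partitions L))"
  proof (intro arg_cong[where f=sum_list] map_cong refl)
    fix P
    have "sum_list (map (\<lambda>Q. (- T) ^ length Q * block_prod b Q w) (map (\<lambda>i. P[i := v # P ! i]) [0..<length P]))
        = (\<Sum>i<length P. (- T) ^ length P * block_prod b (P[i := v # P ! i]) w)"
      using sum_set_upt_conv_sum_list_nat[of "\<lambda>i. (- T) ^ length P * block_prod b (P[i := v # P ! i]) w"
          0 "length P"]
      by (simp add: o_def lessThan_atLeast0)
    thus "(- T) ^ Suc (length P) * block_prod b ([v] # P) w
       + sum_list (map (\<lambda>Q. (- T) ^ length Q * block_prod b Q w) (map (\<lambda>i. P[i := v # P ! i]) [0..<length P]))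
      = - (T * dderiv v b w) * ((- T) ^ length P * block_prod b P w)
       + (- T) ^ length P * (\<Sum>i<length P. block_prod b (P[i := v # P ! i]) w)"
      by (simp add: block_prod_def sum_distrib_left ac_simps)
  qed
  also have "\<dots> = - (T * dderiv v b w) * exp_factor b T L w + dderiv v (exp_factor b T L) w"
    unfolding line_differentiable_exp_factor(2)[OF b L v] exp_factor_def
    by (simp add: sum_list_addf sum_list_const_mult sum_list_subtractf)
  finally show ?thesis .
qed

lemma dderivs_exp:
  assumes b: "smooth b" and L: "set L \<subseteq> coord_dirs"
  shows "foldr dderiv L (\<lambda>w. exp (- (T * b w))) = (\<lambda>w. exp (- (T * b w)) * exp_factor b T L w)"
  using L
proof (induction L)
  case Nil
  show ?case by (simp add: exp_factor_def block_prod_def)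
next
  case (Cons v L)
  have v: "v \<in> coord_dirs" and L: "set L \<subseteq> coord_dirs" using Cons.prems by auto
  have bv: "line_differentiable v b" using line_differentiable_smooth[OF b, of "[]" v] v by simp
  show ?case
  proof
    fix w
    have "foldr dderiv (v # L) (\<lambda>w. exp (- (T * b w))) w
        = dderiv v (\<lambda>w. exp (- (T * b w)) * exp_factor b T L w) w"
      using Cons.IH[OF L] by simp
    also have "\<dots> = exp (- (T * b w)) * (- (T * dderiv v b w)) * exp_factor b T L w
        + exp (- (T * b w)) * dderiv v (exp_factor b T L) w"
      using line_differentiable_mult(2)[OF line_differentiable_exp(1)[OF bv]
          line_differentiable_exp_factor(1)[OF b L v]] line_differentiable_exp(2)[OF bv]
      by simp
    also have "\<dots> = exp (- (T * b w)) * exp_factor b T (v # L) w"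
      unfolding exp_factor_Cons[OF b L v] by (simp only: distrib_left mult.assoc)
    finally show "foldr dderiv (v # L) (\<lambda>w. exp (- (T * b w))) w
        = exp (- (T * b w)) * exp_factor b T (v # L) w" .
  qed
qed

section \<open>Derivatives in the time variable\<close>

fun tderiv_poly :: "complex poly \<Rightarrow> complex \<Rightarrow> nat \<Rightarrow> complex poly" where
  "tderiv_poly q \<beta> 0 = q"
| "tderiv_poly q \<beta> (Suc n) = pderiv (tderiv_poly q \<beta> n) - smult \<beta> (tderiv_poly q \<beta> n)"

lemma tderiv_exp_poly:
  "tderiv n (\<lambda>s. K * (exp (- (of_real s * \<beta>)) * poly q (of_real s)))
   = (\<lambda>s. K * (exp (- (of_real s * \<beta>)) * poly (tderiv_poly q \<beta> n) (of_real s)))"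
proof (induction n)
  case 0 then show ?case by simp
next
  case (Suc n)
  define p where "p = tderiv_poly q \<beta> n"
  have D: "((\<lambda>z. K * (exp (- (z * \<beta>)) * poly p z)) has_field_derivative
      K * (exp (- (z * \<beta>)) * poly (tderiv_poly q \<beta> (Suc n)) z)) (at z)" for z
  proof -
    have "((\<lambda>z. K * (exp (- (z * \<beta>)) * poly p z)) has_field_derivative
      K * (exp (- (z * \<beta>)) * (- \<beta>) * poly p z + exp (- (z * \<beta>)) * poly (pderiv p) z)) (at z)"
      by (rule derivative_eq_intros poly_DERIV refl | simp)+
    thus ?thesis by (simp add: p_def algebra_simps)
  qed
  show ?case
  proof
    fix t
    have "((\<lambda>s. K * (exp (- (of_real s * \<beta>)) * poly p (of_real s))) has_vector_derivative
        K * (exp (- (of_real t * \<beta>)) * poly (tderiv_poly q \<beta> (Suc n)) (of_real t))) (at t)"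
      using has_vector_derivative_real_field[OF D[of "of_real t"]] by simp
    thus "tderiv (Suc n) (\<lambda>s. K * (exp (- (of_real s * \<beta>)) * poly q (of_real s))) t
        = K * (exp (- (of_real t * \<beta>)) * poly (tderiv_poly q \<beta> (Suc n)) (of_real t))"
      using Suc by (simp add: p_def vector_derivative_at)
  qed
qed

lemma degree_tderiv_poly: "degree (tderiv_poly q \<beta> n) \<le> degree q"
proof (induction n)
  case 0 then show ?case by simp
next
  case (Suc n)
  have "degree (pderiv (tderiv_poly q \<beta> n)) \<le> degree q" using Suc by (simp add: degree_pderiv)
  moreover have "degree (smult \<beta> (tderiv_poly q \<beta> n)) \<le> degree q"
    using Suc degree_smult_le order_trans by blast
  ultimately show ?case by (simp add: degree_diff_le)
qed

lemma norm_coeff_tderiv_poly_le: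
  assumes H: "\<And>k. norm (coeff q k) \<le> Kc * norm \<beta> ^ k / fact k"
  shows "norm (coeff (tderiv_poly q \<beta> n) k) \<le> Kc * (2 * norm \<beta>) ^ n * norm \<beta> ^ k / fact k"
proof (induction n arbitrary: k)
  case 0 then show ?case using H by simp
next
  case (Suc n)
  define r where "r = norm \<beta>"
  have r0: "r \<ge> 0" by (simp add: r_def)
  define Q where "Q = tderiv_poly q \<beta> n"
  have "coeff (tderiv_poly q \<beta> (Suc n)) k = of_nat (Suc k) * coeff Q (Suc k) - \<beta> * coeff Q k"
    by (simp add: Q_def coeff_pderiv)
  hence "norm (coeff (tderiv_poly q \<beta> (Suc n)) k) \<le> real (Suc k) * norm (coeff Q (Suc k)) + r * norm (coeff Q k)"
    by (metis norm_triangle_ineq4 norm_mult norm_of_nat r_def)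
  also have "\<dots> \<le> real (Suc k) * (Kc * (2 * r) ^ n * r ^ Suc k / fact (Suc k))
      + r * (Kc * (2 * r) ^ n * r ^ k / fact k)"
    using Suc[of "Suc k"] Suc[of k] r0 unfolding r_def Q_def by (intro add_mono mult_left_mono) auto
  also have "real (Suc k) * (Kc * (2 * r) ^ n * r ^ Suc k / fact (Suc k)) = Kc * (2 * r) ^ n * r ^ Suc k / fact k"
    by (simp only: fact_Suc of_nat_mult) (simp add: field_simps del: of_nat_Suc)
  also have "Kc * (2 * r) ^ n * r ^ Suc k / fact k + r * (Kc * (2 * r) ^ n * r ^ k / fact k)
      = Kc * (2 * r) ^ Suc n * r ^ k / fact k"
    by (simp add: field_simps)
  finally show ?case by (simp add: r_def)
qed

lemma norm_poly_of_real_le: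
  assumes "degree p \<le> m"
  shows "norm (poly p (of_real t :: complex)) \<le> (\<Sum>k\<le>m. norm (coeff p k) * \<bar>t\<bar> ^ k)"
proof -
  have "poly p (of_real t) = (\<Sum>k\<le>m. coeff p k * of_real t ^ k)"
    unfolding poly_altdef
    by (rule sum.mono_neutral_left) (use assms in \<open>auto simp: coeff_eq_0\<close>)
  also have "norm \<dots> \<le> (\<Sum>k\<le>m. norm (coeff p k * of_real t ^ k))" by (rule norm_sum)
  also have "\<dots> = (\<Sum>k\<le>m. norm (coeff p k) * \<bar>t\<bar> ^ k)" by (simp add: norm_mult norm_power)
  finally show ?thesis .
qed

lemma norm_tderiv_exp_poly_le:
  assumes H: "\<And>k. norm (coeff q k) \<le> Kc * norm \<beta> ^ k / fact k" and q: "degree q \<le> m"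
    and K: "norm K = 1"
  shows "norm (tderiv n (\<lambda>s. K * (exp (- (of_real s * \<beta>)) * poly q (of_real s))) t)
     \<le> Kc * 2 ^ n * norm \<beta> ^ n * exp (- t * Re \<beta>) * (\<Sum>r\<le>m. \<bar>t\<bar> ^ r * norm \<beta> ^ r / fact r)"
proof -
  define bound where "bound k = Kc * (2 * norm \<beta>) ^ n * norm \<beta> ^ k / fact k" for k
  have "norm (poly (tderiv_poly q \<beta> n) (of_real t)) \<le> (\<Sum>k\<le>m. norm (coeff (tderiv_poly q \<beta> n) k) * \<bar>t\<bar> ^ k)"
    using degree_tderiv_poly q order_trans by (blast intro: norm_poly_of_real_le)
  also have "\<dots> \<le> (\<Sum>k\<le>m. bound k * \<bar>t\<bar> ^ k)"
    unfolding bound_def by (rule sum_mono, rule mult_right_mono[OF norm_coeff_tderiv_poly_le[OF H]]) simp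
  finally have poly_le: "norm (poly (tderiv_poly q \<beta> n) (of_real t)) \<le> (\<Sum>k\<le>m. bound k * \<bar>t\<bar> ^ k)" .
  have "norm (tderiv n (\<lambda>s. K * (exp (- (of_real s * \<beta>)) * poly q (of_real s))) t)
      = exp (- t * Re \<beta>) * norm (poly (tderiv_poly q \<beta> n) (of_real t))"
    unfolding tderiv_exp_poly by (simp add: norm_mult K norm_exp_eq_Re)
  also have "\<dots> \<le> exp (- t * Re \<beta>) * (\<Sum>k\<le>m. bound k * \<bar>t\<bar> ^ k)"
    using poly_le by (intro mult_left_mono) simp_all
  also have "\<dots> = Kc * 2 ^ n * norm \<beta> ^ n * exp (- t * Re \<beta>) * (\<Sum>r\<le>m. \<bar>t\<bar> ^ r * norm \<beta> ^ r / fact r)"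
    by (simp add: bound_def sum_distrib_left power_mult_distrib ac_simps)
  finally show ?thesis .
qed

lemma norm_prod_list_le:
  fixes f :: "'a \<Rightarrow> 'b::real_normed_div_algebra"
  shows "(\<forall>B\<in>set P. norm (f B) \<le> g B) \<Longrightarrow> norm (prod_list (map f P)) \<le> prod_list (map g P)"
proof (induction P)
  case Nil then show ?case by simp
next
  case (Cons x P)
  have "norm (prod_list (map f (x # P))) = norm (f x) * norm (prod_list (map f P))" by (simp add: norm_mult)
  also have "\<dots> \<le> g x * prod_list (map g P)"
    using Cons order_trans[OF norm_ge_zero, of "f x" "g x"] by (intro mult_mono) auto
  finally show ?case by simp
qed

lemma norm_sum_list_le:
  fixes f :: "'a \<Rightarrow> 'b::real_normed_vector"
  shows "norm (sum_list (map f xs)) \<le> sum_list (map (\<lambda>x. norm (f x)) xs)"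
proof (induction xs)
  case Nil then show ?case by simp
next
  case (Cons x xs) then show ?case using norm_triangle_ineq[of "f x" "sum_list (map f xs)"] by simp
qed

lemma prod_list_mult_power_length:
  fixes c z :: "'a::comm_monoid_mult"
  shows "prod_list (map (\<lambda>B. c * z ^ length B * F B) P)
    = c ^ length P * z ^ sum_list (map length P) * prod_list (map F P)"
  by (induction P) (auto simp: power_add ac_simps)

lemma coeff_sum_list: "coeff (sum_list (map f xs)) k = sum_list (map (\<lambda>x. coeff (f x) k) xs)"
  by (induction xs) auto

lemma (in logconvex_weight) prod_list_A_lengths:
  "prod_list (map (\<lambda>B. A (length B)) P) = prod_list (map (reduced A) (map length P)) * fact_weight P"
proof (induction P)
  case Nil then show ?case by (simp add: fact_weight_def)
next
  case (Cons x P)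
  have "A (length x) = reduced A (length x) * fact (length x)" by (rule A_eq_reduced)
  then show ?case using Cons.IH by (simp add: fact_weight_def ac_simps)
qed

lemma jbr_pos: "jbr w > 0"
  by (simp add: jbr_def add_pos_nonneg)

lemma jbr_powr_mult_nat: "jbr w powr (- \<rho> * real k) = (jbr w powr (- \<rho>)) ^ k"
proof -
  have "jbr w powr (- \<rho> * real k) = (jbr w powr (- \<rho>)) powr (real k)" by (simp add: powr_powr)
  also have "\<dots> = (jbr w powr (- \<rho>)) ^ k" using jbr_pos[of w] by (intro powr_realpow) simp
  finally show ?thesis .
qed

definition hypo_ii_bound :: "(nat \<Rightarrow> real) \<Rightarrow> real \<Rightarrow> real \<Rightarrow> ('n::finite pt \<Rightarrow> complex)
    \<Rightarrow> real \<Rightarrow> real \<Rightarrow> bool" where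
  "hypo_ii_bound A \<rho> B b h C \<longleftrightarrow> (\<forall>\<alpha> \<beta> x \<xi>. (x, \<xi>) \<notin> Qbox B \<longrightarrow>
     norm (Dop \<alpha> \<beta> b (x, \<xi>)) \<le> C * h ^ (mlen \<alpha> + mlen \<beta>) * norm (b (x, \<xi>))
       * A (mlen \<alpha>) * A (mlen \<beta>) * jbr (x, \<xi>) powr (- \<rho> * real (mlen \<alpha> + mlen \<beta>)))"

lemma (in logconvex_weight) hypo_ii_bound_mono:
  fixes b :: "'n::finite pt \<Rightarrow> complex"
  assumes "hypo_ii_bound A \<rho> B b h C" and "C \<le> C'" and "h > 0"
  shows "hypo_ii_bound A \<rho> B b h C'"
  unfolding hypo_ii_bound_def
proof (intro allI impI)
  fix \<alpha> \<beta> :: "'n \<Rightarrow> nat" and x \<xi> :: "real^'n" assume w: "(x, \<xi>) \<notin> Qbox B"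
  have "0 \<le> h ^ (mlen \<alpha> + mlen \<beta>) * norm (b (x, \<xi>)) * A (mlen \<alpha>) * A (mlen \<beta>)
      * jbr (x, \<xi>) powr (- \<rho> * real (mlen \<alpha> + mlen \<beta>))"
    using assms(3) A_pos by (intro mult_nonneg_nonneg) (auto intro: less_imp_le)
  with assms(1,2) w show "norm (Dop \<alpha> \<beta> b (x, \<xi>)) \<le> C' * h ^ (mlen \<alpha> + mlen \<beta>) * norm (b (x, \<xi>))
      * A (mlen \<alpha>) * A (mlen \<beta>) * jbr (x, \<xi>) powr (- \<rho> * real (mlen \<alpha> + mlen \<beta>))"
    unfolding hypo_ii_bound_def
    by (smt (verit, best) mult.assoc mult_right_mono)
qed

lemma (in logconvex_weight) norm_dderivs_block_le:
  fixes b :: "'n::finite pt \<Rightarrow> complex"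
  assumes est: "hypo_ii_bound A \<rho> B b h C" and C: "C \<ge> 0" and h: "h > 0" and w: "w \<notin> Qbox B"
    and Bl: "subseq Bl (dirs_of exi \<alpha> @ dirs_of ex \<beta>)"
  shows "norm (foldr dderiv Bl b w) \<le> C * norm (b w) * (h * jbr w powr (- \<rho>)) ^ length Bl * A (length Bl)"
proof -
  define J where "J = jbr w powr (- \<rho>)"
  define r where "r = norm (b w)"
  have J: "J > 0" using jbr_pos[of w] by (simp add: J_def)
  obtain \<alpha>' \<beta>' where ab: "Bl = dirs_of exi \<alpha>' @ dirs_of ex \<beta>'" "length Bl = mlen \<alpha>' + mlen \<beta>'"
    using subseq_dirs_of[OF Bl] by blast
  have "norm (foldr dderiv Bl b w) = norm (Dop \<alpha>' \<beta>' b w)"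
    by (simp add: Dop_def ab(1) norm_mult norm_power)
  also have "\<dots> \<le> C * h ^ (mlen \<alpha>' + mlen \<beta>') * r * A (mlen \<alpha>') * A (mlen \<beta>')
      * jbr w powr (- \<rho> * real (mlen \<alpha>' + mlen \<beta>'))"
    using est w unfolding hypo_ii_bound_def r_def by (metis prod.collapse)
  also have "\<dots> = C * h ^ length Bl * r * J ^ length Bl * (A (mlen \<alpha>') * A (mlen \<beta>'))"
    by (simp only: ab(2)[symmetric] jbr_powr_mult_nat J_def ac_simps)
  also have "\<dots> \<le> C * h ^ length Bl * r * J ^ length Bl * A (length Bl)"
    using A_mult_le[of "mlen \<alpha>'" "mlen \<beta>'"] C h J ab(2)
    by (intro mult_left_mono) (auto simp: r_def)
  also have "\<dots> = C * r * (h * J) ^ length Bl * A (length Bl)"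
    by (simp add: power_mult_distrib ac_simps)
  finally show ?thesis by (simp add: r_def J_def)
qed

lemma (in logconvex_weight) norm_block_prod_le:
  fixes b :: "'n::finite pt \<Rightarrow> complex"
  assumes est: "hypo_ii_bound A \<rho> B b h C" and C: "C \<ge> 0" and h: "h > 0"
    and E: "E \<ge> 0" "\<And>k. C ^ k \<le> E * (\<Prod>i\<in>{1..<k}. reduced_ratio A i)"
    and w: "w \<notin> Qbox B" and P: "P \<in> set (list_partitions (dirs_of exi \<alpha> @ dirs_of ex \<beta>))"
  shows "norm (block_prod b P w) \<le> E * reduced A (mlen \<alpha> + mlen \<beta>) * (h * jbr w powr (- \<rho>)) ^ (mlen \<alpha> + mlen \<beta>)
    * norm (b w) ^ length P * fact_weight P"
proof -
  define J where "J = jbr w powr (- \<rho>)"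
  define r where "r = norm (b w)"
  define m where "m = mlen \<alpha> + mlen \<beta>"
  define R where "R = prod_list (map (reduced A) (map length P))"
  have J: "J > 0" using jbr_pos[of w] by (simp add: J_def)
  have P_props: "sum_list (map length P) = m" "\<forall>Bl\<in>set P. Bl \<noteq> [] \<and> subseq Bl (dirs_of exi \<alpha> @ dirs_of ex \<beta>)"
    using list_partitions_props[OF P] by (auto simp: m_def length_dirs_of)
  have "norm (block_prod b P w) \<le> prod_list (map (\<lambda>Bl. C * r * (h * J) ^ length Bl * A (length Bl)) P)"
    unfolding block_prod_def r_def J_def using norm_dderivs_block_le[OF est C h w] P_props(2)
    by (intro norm_prod_list_le) blast
  also have "\<dots> = (C * r) ^ length P * (h * J) ^ m * (R * fact_weight P)"
    by (simp only: prod_list_mult_power_length P_props(1) prod_list_A_lengths R_def)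
  also have "\<dots> = (r ^ length P * (h * J) ^ m * fact_weight P) * (C ^ length P * R)"
    by (simp add: power_mult_distrib ac_simps)
  also have "\<dots> \<le> (r ^ length P * (h * J) ^ m * fact_weight P) * (E * reduced A m)"
  proof (rule mult_left_mono)
    have R: "R \<ge> 0" unfolding R_def by (intro prod_list_nonneg) (auto intro: less_imp_le reduced_pos)
    have "C ^ length P * R \<le> E * (R * (\<Prod>i\<in>{1..<length (map length P)}. reduced_ratio A i))"
      using mult_right_mono[OF E(2) R] by (simp add: ac_simps)
    also have "\<dots> \<le> E * reduced A (sum_list (map length P))"
      using P_props(2) E(1) unfolding R_def
      by (intro mult_left_mono prod_reduced_mult_ratios_le) (auto simp: Suc_le_eq)
    finally show "C ^ length P * R \<le> E * reduced A m" using P_props(1) by simp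
    show "0 \<le> r ^ length P * (h * J) ^ m * fact_weight P"
      using h J fact_weight_pos[of P] by (simp add: r_def less_imp_le)
  qed
  finally show ?thesis by (simp add: r_def J_def m_def ac_simps)
qed

definition exp_poly :: "('n::finite pt \<Rightarrow> complex) \<Rightarrow> 'n pt list \<Rightarrow> 'n pt \<Rightarrow> complex poly" where
  "exp_poly b L w =
    sum_list (map (\<lambda>P. monom ((- 1) ^ length P * block_prod b P w) (length P)) (list_partitions L))"

lemma poly_exp_poly: "poly (exp_poly b L w) T = exp_factor b T L w"
proof -
  have poly_sum_list_map: "poly (sum_list (map f Ps)) T = sum_list (map (\<lambda>P. poly (f P) T) Ps)" for f Ps
    by (induction Ps) auto
  have "poly (monom ((- 1) ^ length P * block_prod b P w) (length P)) T = (- T) ^ length P * block_prod b P w"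
    for P
  proof -
    have "(- T) ^ length P = (- 1) ^ length P * T ^ length P"
      by (metis mult_minus1 power_mult_distrib)
    thus ?thesis unfolding poly_monom by (simp only: mult_ac)
  qed
  thus ?thesis
    unfolding exp_poly_def exp_factor_def poly_sum_list_map by simp
qed

lemma coeff_exp_poly: "coeff (exp_poly b L w) k
    = sum_list (map (\<lambda>P. if length P = k then (- 1) ^ k * block_prod b P w else 0) (list_partitions L))"
  unfolding exp_poly_def coeff_sum_list by (intro arg_cong[where f=sum_list] map_cong refl) (simp add: coeff_monom)

lemma degree_exp_poly: "degree (exp_poly b L w) \<le> length L"
proof (rule degree_le, intro allI impI)
  fix k assume "length L < k"
  hence "\<forall>P\<in>set (list_partitions L). length P \<noteq> k" using list_partitions_props by fastforce
  hence "map (\<lambda>P. if length P = k then (- 1) ^ k * block_prod b P w else 0) (list_partitions L)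
      = map (\<lambda>P. 0) (list_partitions L)"
    by auto
  thus "coeff (exp_poly b L w) k = 0" unfolding coeff_exp_poly by (simp only:) simp
qed

lemma norm_coeff_exp_poly_le:
  assumes bound: "\<forall>P\<in>set (list_partitions L). norm (block_prod b P w) \<le> c * r ^ length P * fact_weight P"
    and c: "c \<ge> 0" and r: "r \<ge> 0"
  shows "norm (coeff (exp_poly b L w) k) \<le> c * 3 ^ length L * fact (length L) * r ^ k / fact k"
proof -
  have "norm (coeff (exp_poly b L w) k)
      \<le> sum_list (map (\<lambda>P. norm (if length P = k then (- 1) ^ k * block_prod b P w else 0)) (list_partitions L))"
    unfolding coeff_exp_poly by (rule norm_sum_list_le)
  also have "\<dots> \<le> sum_list (map (\<lambda>P. c * r ^ k * (if length P = k then fact_weight P else 0)) (list_partitions L))"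
    using bound by (intro sum_list_mono) (auto simp: norm_mult norm_power ac_simps)
  also have "\<dots> = c * r ^ k * weighted_partitions L k"
    by (simp add: weighted_partitions_def sum_list_const_mult)
  also have "\<dots> \<le> c * r ^ k * (3 ^ length L * fact (length L) / fact k)"
    using weighted_partitions_le[of L k] c r by (intro mult_left_mono) auto
  finally show ?thesis by (simp add: ac_simps)
qed

lemma Dop_exp_eq:
  assumes "smooth b"
  shows "Dop \<alpha> \<beta> (\<lambda>w'. exp (- (complex_of_real s * b w'))) w = (- \<i>) ^ (mlen \<alpha> + mlen \<beta>)
    * (exp (- (of_real s * b w)) * poly (exp_poly b (dirs_of exi \<alpha> @ dirs_of ex \<beta>) w) (of_real s))"
  unfolding Dop_def dderivs_exp[OF assms dirs_of_coord_dirs] poly_exp_poly by simp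

lemma (in logconvex_weight) norm_coeff_exp_poly_dirs_le:
  fixes b :: "'n::finite pt \<Rightarrow> complex" and \<alpha> \<beta> :: "'n \<Rightarrow> nat"
  assumes est: "hypo_ii_bound A \<rho> B b h C" and C: "C \<ge> 0" and h: "h > 0"
    and E: "E \<ge> 0" "\<And>k. C ^ k \<le> E * (\<Prod>i\<in>{1..<k}. reduced_ratio A i)" and w: "w \<notin> Qbox B"
  defines "m \<equiv> mlen \<alpha> + mlen \<beta>"
  shows "norm (coeff (exp_poly b (dirs_of exi \<alpha> @ dirs_of ex \<beta>) w) k)
    \<le> E * A m * (3 * h) ^ m * (jbr w powr (- \<rho>)) ^ m * norm (b w) ^ k / fact k"
proof -
  define c where "c = E * reduced A m * (h * jbr w powr (- \<rho>)) ^ m"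
  have c: "c \<ge> 0" using E(1) reduced_pos[of m] h jbr_pos[of w] by (simp add: c_def)
  have "\<forall>P\<in>set (list_partitions (dirs_of exi \<alpha> @ dirs_of ex \<beta>)).
      norm (block_prod b P w) \<le> c * norm (b w) ^ length P * fact_weight P"
    unfolding c_def m_def using norm_block_prod_le[OF est C h E w] by simp
  from norm_coeff_exp_poly_le[OF this c norm_ge_zero, of k]
  show ?thesis
    by (simp add: c_def m_def length_dirs_of A_eq_reduced power_mult_distrib ac_simps)
qed

lemma (in logconvex_weight) exp_estimate_of_hypo_ii_bound:
  fixes b :: "'n::finite pt \<Rightarrow> complex"
  assumes M3': "condM3' A" and b: "smooth b" and h: "h > 0" and est: "hypo_ii_bound A \<rho> B b h C"
  shows "\<exists>C'>0. exp_estimate A \<rho> B b (3 * h) C'"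
proof -
  define C' where "C' = max C 0"
  have est': "hypo_ii_bound A \<rho> B b h C'" and C': "C' \<ge> 0"
    using hypo_ii_bound_mono[OF est _ h] by (auto simp: C'_def)
  obtain E where E: "E \<ge> 1" "\<And>k. C' ^ k \<le> E * (\<Prod>i\<in>{1..<k}. reduced_ratio A i)"
    using power_le_prod_reduced_ratio[OF M3' C'] by auto
  have "exp_estimate A \<rho> B b (3 * h) E"
    unfolding exp_estimate_def
  proof (intro allI impI)
    fix \<alpha> \<beta> :: "'n \<Rightarrow> nat" and n :: nat and t :: real and w :: "'n pt"
    assume w: "w \<notin> Qbox B"
    define L where "L = dirs_of exi \<alpha> @ dirs_of ex \<beta>"
    define m where "m = mlen \<alpha> + mlen \<beta>"
    define K where "K = E * A m * (3 * h) ^ m * (jbr w powr (- \<rho>)) ^ m"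
    have "norm (Dtw_exp n \<alpha> \<beta> b t w)
        = norm (tderiv n (\<lambda>s. (- \<i>) ^ m * (exp (- (of_real s * b w)) * poly (exp_poly b L w) (of_real s))) t)"
      unfolding Dtw_exp_def Dop_exp_eq[OF b] L_def m_def by (simp add: norm_mult norm_power)
    also have "\<dots> \<le> K * 2 ^ n * norm (b w) ^ n * exp (- t * Re (b w))
        * (\<Sum>r\<le>m. \<bar>t\<bar> ^ r * norm (b w) ^ r / fact r)"
      using norm_coeff_exp_poly_dirs_le[OF est' C' h _ E(2) w] E(1) degree_exp_poly[of b L w]
      unfolding K_def L_def m_def
      by (intro norm_tderiv_exp_poly_le) (auto simp: norm_power length_dirs_of)
    finally show "norm (Dtw_exp n \<alpha> \<beta> b t w) \<le> E * 2 ^ n * (3 * h) ^ (mlen \<alpha> + mlen \<beta>)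
        * A (mlen \<alpha> + mlen \<beta>) * jbr w powr (- \<rho> * real (mlen \<alpha> + mlen \<beta>)) * norm (b w) ^ n
        * exp (- t * Re (b w)) * (\<Sum>r\<le>mlen \<alpha> + mlen \<beta>. \<bar>t\<bar> ^ r * norm (b w) ^ r / fact r)"
      unfolding jbr_powr_mult_nat by (simp add: K_def m_def ac_simps)
  qed
  thus ?thesis using E(1) by (intro exI[of _ E]) auto
qed

text \<open>Only smoothness of \<open>b\<close>, condition (ii) and (M.3)', (M.4) for \<open>A\<close> are used.\<close>

theorem lemma7p5:
  fixes kind :: ultra and M A :: "nat \<Rightarrow> real" and \<rho> B :: real
    and b :: "(real^'n::finite) \<times> (real^'n) \<Rightarrow> complex"
  assumes "weight_seq M" "condM1 M" "condM2 M" "condM3 M"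
    and "weight_seq A" "condM1 A" "condM2 A" "condM3' A" "condM4 A"
    and "\<exists>c L. \<forall>p. A p \<le> c * L ^ p * M p"
    and "admissible_rho M A \<rho>"
    and "in_Gamma kind M A \<rho> b"
    and "hypoelliptic kind M A \<rho> B b"
  shows "case kind of
           Beurling \<Rightarrow> (\<forall>h>0. \<exists>C>0. exp_estimate A \<rho> B b h C)
         | Roumieu \<Rightarrow> (\<exists>h>0. \<exists>C>0. exp_estimate A \<rho> B b h C)"
proof -
  interpret logconvex_weight A using assms(5,9) by unfold_locales
  have b: "smooth b" using assms(12) by (simp add: in_Gamma_def)
  have ii: "hypo_ii kind A \<rho> B b" using assms(13) by (simp add: hypoelliptic_def)
  note estimate = exp_estimate_of_hypo_ii_bound[OF assms(8) b]
  show ?thesis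
  proof (cases kind)
    case Beurling
    have bounds: "\<forall>h>0. \<exists>C. hypo_ii_bound A \<rho> B b h C"
      using ii unfolding hypo_ii_def hypo_ii_bound_def Let_def Beurling by simp
    have "\<exists>C>0. exp_estimate A \<rho> B b h C" if h: "h > 0" for h
    proof -
      obtain C where "hypo_ii_bound A \<rho> B b (h / 3) C"
        using bounds h by (meson divide_pos_pos zero_less_numeral)
      from estimate[OF _ this] h show ?thesis by simp
    qed
    thus ?thesis using Beurling by simp
  next
    case Roumieu
    obtain h C where h: "h > 0" and bound: "hypo_ii_bound A \<rho> B b h C"
      using ii unfolding hypo_ii_def hypo_ii_bound_def Let_def Roumieu by auto
    have "\<exists>h'>0. \<exists>C>0. exp_estimate A \<rho> B b h' C"
      using estimate[OF h bound] h by (intro exI[of _ "3 * h"]) simp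
    thus ?thesis using Roumieu by simp
  qed
qed

end
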